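(* Suppose that the comparison equation $(-\Delta+V^0)\phi=0$ has a solution basis $\phi^\pm$ such that $\lim_{n \to \infty}\phi_n^- = 0$, $|\phi_n^+|$ is monotonically nondecreasing for sufficiently large $n$, and $\beta_n := (V_n - V^0_n)/W$ satisfies $\beta_n (1 + |\phi_n^+ \phi_n^-|^2) \in\ell^1$. Then for $N$ sufficiently large, ${\cal M}$ is a contraction on ${\cal B}_N$. Consequently, there exists a unique solution $\psi^-$ of $(-\Delta+V)\psi=0$ such that $\psi_n^- = a_n^+ \phi_n^+ + a_n^- \phi_n^-$, where $\lim_{n \to \infty}{a_n^+} = 0$ and $\lim_{n \to \infty}{a_n^-} = 1$. Moreover, if we define $\widehat{\psi}_n^- := \max_{m \ge n}{|\phi_m^-|}$, then $\psi_n^- = \phi_n^- + r_n \widehat{\psi}_n^-$, with $\lim_{n \to \infty}{r_n} = 0$.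
   Context: On the positive integers, $(\Delta f)_n = f_{n+1}+f_{n-1}-2f_n$, and one considers $(-\Delta+V)\psi=0$ and the comparison equation $(-\Delta+V^0)\phi=0$ with real potentials $V_n, V^0_n$. For independent solutions $\phi^\pm$ of the comparison equation, $W = \phi^-_n\phi^+_{n+1}-\phi^-_{n+1}\phi^+_n$ is their (constant) Wronskian and $\beta_n = (V_n-V^0_n)/W$. Solutions of $(-\Delta+V)\psi=0$ are written $\psi_n = a_n^+\phi_n^+ + a_n^-\phi_n^-$ with variable coefficients. The weighted Banach space is ${\cal B}_N=\{\mathbf{X}=(X^+_n,X^-_n)^T : \|\mathbf{X}\|_N := \sup_{n\ge N}(|(\phi^+_n)^2X^+_n|+|X^-_n|)<\infty\}$, and ${\cal M}$ is the linear operator $({\cal M}\mathbf{X})_n := \sum_{k=0}^\infty \beta_{n+k}\begin{pmatrix}\phi^+_{n+k}\phi^-_{n+k} & (\phi^-_{n+k})^2\\ -(\phi^+_{n+k})^2 & -\phi^+_{n+k}\phi^-_{n+k}\end{pmatrix}\mathbf{X}_{n+k}$; the coefficient vector $\mathbf{a}=(a^+_n,a^-_n)^T$ solves $\mathbf{a} = (0,1)^T - {\cal M}\mathbf{a}$. *)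

theory Defs
  imports "HOL-Analysis.Analysis"
begin

text \<open>Sequences are functions nat => real; the difference equations are imposed
for all n >= 1 (so that n - 1 is meaningful).\<close>

definition lap :: "(nat \<Rightarrow> real) \<Rightarrow> nat \<Rightarrow> real" where
  "lap f n = f (n + 1) + f (n - 1) - 2 * f n"

definition solves :: "(nat \<Rightarrow> real) \<Rightarrow> (nat \<Rightarrow> real) \<Rightarrow> bool" where
  "solves V f \<longleftrightarrow> (\<forall>n\<ge>1. - lap f n + V n * f n = 0)"

text \<open>Wronskian W = phi^-_n phi^+_(n+1) - phi^-_(n+1) phi^+_n (constant for solutions; taken at n = 0).\<close>
definition wronskian :: "(nat \<Rightarrow> real) \<Rightarrow> (nat \<Rightarrow> real) \<Rightarrow> real" where
  "wronskian pm pp = pm 0 * pp 1 - pm 1 * pp 0"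

definition beta :: "(nat \<Rightarrow> real) \<Rightarrow> (nat \<Rightarrow> real) \<Rightarrow> (nat \<Rightarrow> real) \<Rightarrow> (nat \<Rightarrow> real) \<Rightarrow> nat \<Rightarrow> real" where
  "beta V V0 pm pp n = (V n - V0 n) / wronskian pm pp"

definition BN_seq :: "(nat \<Rightarrow> real) \<Rightarrow> (nat \<Rightarrow> real \<times> real) \<Rightarrow> nat \<Rightarrow> real" where
  "BN_seq pp X n = \<bar>(pp n)\<^sup>2 * fst (X n)\<bar> + \<bar>snd (X n)\<bar>"

definition in_BN :: "(nat \<Rightarrow> real) \<Rightarrow> nat \<Rightarrow> (nat \<Rightarrow> real \<times> real) \<Rightarrow> bool" where
  "in_BN pp N X \<longleftrightarrow> bdd_above (BN_seq pp X ` {N..})"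

definition BN_norm :: "(nat \<Rightarrow> real) \<Rightarrow> nat \<Rightarrow> (nat \<Rightarrow> real \<times> real) \<Rightarrow> real" where
  "BN_norm pp N X = (SUP n\<in>{N..}. BN_seq pp X n)"

definition M_plus_term :: "(nat \<Rightarrow> real) \<Rightarrow> (nat \<Rightarrow> real) \<Rightarrow> (nat \<Rightarrow> real) \<Rightarrow> (nat \<Rightarrow> real)
    \<Rightarrow> (nat \<Rightarrow> real \<times> real) \<Rightarrow> nat \<Rightarrow> nat \<Rightarrow> real" where
  "M_plus_term V V0 pm pp X n k = beta V V0 pm pp (n + k) *
     (pp (n + k) * pm (n + k) * fst (X (n + k)) + (pm (n + k))\<^sup>2 * snd (X (n + k)))"

definition M_minus_term :: "(nat \<Rightarrow> real) \<Rightarrow> (nat \<Rightarrow> real) \<Rightarrow> (nat \<Rightarrow> real) \<Rightarrow> (nat \<Rightarrow> real)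
    \<Rightarrow> (nat \<Rightarrow> real \<times> real) \<Rightarrow> nat \<Rightarrow> nat \<Rightarrow> real" where
  "M_minus_term V V0 pm pp X n k = beta V V0 pm pp (n + k) *
     (- (pp (n + k))\<^sup>2 * fst (X (n + k)) - pp (n + k) * pm (n + k) * snd (X (n + k)))"

definition M_op :: "(nat \<Rightarrow> real) \<Rightarrow> (nat \<Rightarrow> real) \<Rightarrow> (nat \<Rightarrow> real) \<Rightarrow> (nat \<Rightarrow> real)
    \<Rightarrow> (nat \<Rightarrow> real \<times> real) \<Rightarrow> nat \<Rightarrow> real \<times> real" where
  "M_op V V0 pm pp X n =
     ((\<Sum>k. M_plus_term V V0 pm pp X n k), (\<Sum>k. M_minus_term V V0 pm pp X n k))"

definition M_contraction_on_BN :: "(nat \<Rightarrow> real) \<Rightarrow> (nat \<Rightarrow> real) \<Rightarrow> (nat \<Rightarrow> real) \<Rightarrow> (nat \<Rightarrow> real)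
    \<Rightarrow> nat \<Rightarrow> bool" where
  "M_contraction_on_BN V V0 pm pp N \<longleftrightarrow>
     (\<exists>q::real. 0 \<le> q \<and> q < 1 \<and>
        (\<forall>X. in_BN pp N X \<longrightarrow>
           (\<forall>n\<ge>N. summable (M_plus_term V V0 pm pp X n) \<and> summable (M_minus_term V V0 pm pp X n))
           \<and> in_BN pp N (M_op V V0 pm pp X)
           \<and> BN_norm pp N (M_op V V0 pm pp X) \<le> q * BN_norm pp N X))"

text \<open>Variable coefficients (variation of parameters) of psi w.r.t. phi^+-, for n >= 1:
  psi_n = a^+_n phi^+_n + a^-_n phi^-_n and psi_(n-1) = a^+_n phi^+_(n-1) + a^-_n phi^-_(n-1).
  These are exactly the coefficients satisfying a_(n+1) - a_n = beta_n K_n a_n, i.e. a = (0,1) - M a.\<close>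
definition coeff_plus :: "(nat \<Rightarrow> real) \<Rightarrow> (nat \<Rightarrow> real) \<Rightarrow> (nat \<Rightarrow> real) \<Rightarrow> nat \<Rightarrow> real" where
  "coeff_plus pm pp psi n = (pm (n - 1) * psi n - pm n * psi (n - 1)) / wronskian pm pp"

definition coeff_minus :: "(nat \<Rightarrow> real) \<Rightarrow> (nat \<Rightarrow> real) \<Rightarrow> (nat \<Rightarrow> real) \<Rightarrow> nat \<Rightarrow> real" where
  "coeff_minus pm pp psi n = (psi (n - 1) * pp n - psi n * pp (n - 1)) / wronskian pm pp"

definition psi_hat :: "(nat \<Rightarrow> real) \<Rightarrow> nat \<Rightarrow> real" where
  "psi_hat pm n = (SUP m\<in>{n..}. \<bar>pm m\<bar>)"

end

theory Submission
  imports Defs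
begin

text \<open>Write \<open>\<psi> = a\<^sup>+ \<phi>\<^sup>+ + a\<^sup>- \<phi>\<^sup>-\<close> (variation of parameters). Then \<open>\<psi>\<close> solves
  \<open>(-\<Delta>+V)\<psi> = 0\<close> as soon as \<open>a(n+1) - a(n) = \<beta>(n) K(n) a(n)\<close>, where \<open>K(n)\<close> is the
  rank-one matrix in the definition of \<open>M\<close>; summing these increments from \<open>n\<close> to \<open>\<infinity>\<close> with
  \<open>a \<longlonglongrightarrow> (0,1)\<close> gives \<open>a = (0,1) - M a\<close>. Because \<open>|\<phi>\<^sup>+(n)| \<le> |\<phi>\<^sup>+(n+k)|\<close>, the \<open>n\<close>-th
  component of \<open>M X\<close> is bounded in the weighted norm by \<open>4 \<parallel>X\<parallel>\<^sub>N T(n)\<close>, where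
  \<open>T(n) = \<Sum>\<^sub>k\<^sub>\<ge>\<^sub>n |\<beta>(k)| (1 + |\<phi>\<^sup>+(k) \<phi>\<^sup>-(k)|\<^sup>2)\<close> is an \<open>\<ell>\<^sup>1\<close> tail. So \<open>M\<close> is a contraction
  once \<open>T(N)\<close> is small, Banach's fixed point theorem provides the coefficients, and the same
  bound makes \<open>a\<^sup>+(n)\<close>, \<open>a\<^sup>-(n) - 1\<close> and \<open>(\<psi>(n) - \<phi>\<^sup>-(n)) / psi_hat(n)\<close> of order \<open>T(n)\<close>.
  For uniqueness, the Casorati determinant of two such solutions is constant and, written
  through their coefficients, tends to 0; so they are proportional, and \<open>a\<^sup>- \<longlonglongrightarrow> 1\<close> forces
  them to coincide.\<close>

lemma solves_recurrence:
  assumes "solves V f"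
  shows "f (Suc (Suc n)) = (2 + V (Suc n)) * f (Suc n) - f n"
proof -
  have "- lap f (Suc n) + V (Suc n) * f (Suc n) = 0"
    using assms unfolding solves_def by auto
  then show ?thesis unfolding lap_def by (simp add: algebra_simps)
qed

lemma casorati_const:
  assumes "solves V f" "solves V g"
  shows "f n * g (Suc n) - f (Suc n) * g n = f 0 * g 1 - f 1 * g 0"
proof (induction n)
  case (Suc n)
  have "f (Suc n) * g (Suc (Suc n)) - f (Suc (Suc n)) * g (Suc n)
      = f n * g (Suc n) - f (Suc n) * g n"
    unfolding solves_recurrence[OF assms(1)] solves_recurrence[OF assms(2)]
    by (simp add: algebra_simps)
  then show ?case using Suc by simp
qed simp

lemma solves_diff_scaled:
  assumes "solves V f" "solves V g"
  shows "solves V (\<lambda>n. f n - c * g n)"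
  unfolding solves_def
proof (intro allI impI)
  fix n :: nat
  assume "n \<ge> 1"
  then have "- lap f n + V n * f n = 0" "- lap g n + V n * g n = 0"
    using assms by (auto simp: solves_def)
  moreover have "- lap (\<lambda>n. f n - c * g n) n + V n * (f n - c * g n)
      = (- lap f n + V n * f n) - c * (- lap g n + V n * g n)"
    by (simp add: lap_def algebra_simps)
  ultimately show "- lap (\<lambda>n. f n - c * g n) n + V n * (f n - c * g n) = 0"
    by simp
qed

lemma solves_eq_0_if_consecutive_zeros:
  assumes E: "solves V E" and "E k = 0" "E (Suc k) = 0"
  shows "E n = 0"
proof -
  have forward: "E (k + i) = 0 \<and> E (Suc (k + i)) = 0" for i
    by (induction i) (use assms solves_recurrence[OF E] in auto)
  have backward: "E (k - i) = 0 \<and> E (Suc (k - i)) = 0" if "i \<le> k" for i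
    using that
  proof (induction i)
    case (Suc i)
    then have "E (Suc (k - Suc i)) = 0" "E (Suc (Suc (k - Suc i))) = 0"
      by (simp_all add: Suc_diff_Suc)
    then show ?case
      using solves_recurrence[OF E, of "k - Suc i"] by simp
  qed (use assms in simp)
  show ?thesis
    using forward[of "n - k"] backward[of "k - n"]
    by (cases "k \<le> n") simp_all
qed

lemma solves_proportional_if_casorati_zero:
  assumes f: "solves V f" and g: "solves V g" and "g k \<noteq> 0"
    and "f 0 * g 1 - f 1 * g 0 = 0"
  shows "f n = (f k / g k) * g n"
proof -
  define E where "E n = f n - (f k / g k) * g n" for n
  have "solves V E"
    unfolding E_def[abs_def] by (rule solves_diff_scaled[OF f g])
  moreover have "E k = 0"
    using assms(3) by (simp add: E_def)
  moreover have "E (Suc k) = 0"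
    using casorati_const[OF f g, of k] assms(3,4) by (simp add: E_def field_simps)
  ultimately have "E n = 0"
    by (rule solves_eq_0_if_consecutive_zeros)
  then show ?thesis by (simp add: E_def)
qed

lemma solves_extend_tail:
  "\<forall>n\<ge>Suc N. - lap g n + V n * g n = 0 \<Longrightarrow> \<exists>f. solves V f \<and> (\<forall>n\<ge>N. f n = g n)"
proof (induction N arbitrary: g)
  case 0
  then show ?case by (intro exI[of _ g]) (auto simp: solves_def)
next
  case (Suc N)
  define g' where "g' = g(N := (2 + V (Suc N)) * g (Suc N) - g (Suc (Suc N)))"
  have "\<forall>n\<ge>Suc N. - lap g' n + V n * g' n = 0"
  proof (intro allI impI)
    fix n
    assume "n \<ge> Suc N"
    then consider "n = Suc N" | "n \<ge> Suc (Suc N)" by linarith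
    then show "- lap g' n + V n * g' n = 0"
    proof cases
      case 1
      then show ?thesis by (simp add: lap_def g'_def algebra_simps)
    next
      case 2
      then have "lap g' n = lap g n" "g' n = g n" by (auto simp: lap_def g'_def)
      then show ?thesis using Suc.prems 2 by simp
    qed
  qed
  then obtain f where "solves V f" "\<forall>n\<ge>N. f n = g' n"
    using Suc.IH by blast
  then show ?case by (intro exI[of _ f]) (auto simp: g'_def)
qed

lemma coeff_plus_diff_scaled:
  "coeff_plus pm pp (\<lambda>n. f n - c * g n) n = coeff_plus pm pp f n - c * coeff_plus pm pp g n"
  unfolding coeff_plus_def by (cases "wronskian pm pp = 0") (simp_all add: field_simps)

lemma coeff_minus_diff_scaled:
  "coeff_minus pm pp (\<lambda>n. f n - c * g n) n = coeff_minus pm pp f n - c * coeff_minus pm pp g n"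
  unfolding coeff_minus_def by (cases "wronskian pm pp = 0") (simp_all add: field_simps)

lemma summable_comparison_bound:
  fixes f g :: "nat \<Rightarrow> real"
  assumes g: "summable g" and le: "\<And>k. \<bar>f k\<bar> \<le> c * g k"
  shows "summable f" "\<bar>suminf f\<bar> \<le> c * suminf g"
proof -
  have cg: "summable (\<lambda>k. c * g k)" using g by (rule summable_mult)
  show "summable f" using le by (intro summable_comparison_test'[OF cg]) auto
  have abs_f: "summable (\<lambda>k. \<bar>f k\<bar>)" using le by (intro summable_comparison_test'[OF cg]) auto
  have "\<bar>suminf f\<bar> \<le> (\<Sum>k. \<bar>f k\<bar>)" by (rule summable_rabs[OF abs_f])
  also have "\<dots> \<le> (\<Sum>k. c * g k)" by (intro suminf_le abs_f cg le)
  also have "\<dots> = c * suminf g" by (rule suminf_mult[OF g])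
  finally show "\<bar>suminf f\<bar> \<le> c * suminf g" .
qed

lemma le_twice_one_plus_square:
  fixes u B :: real
  assumes "0 \<le> B"
  shows "(1 + u) * B \<le> 2 * B * (1 + u\<^sup>2)" "(u + u\<^sup>2) * B \<le> 2 * B * (1 + u\<^sup>2)"
proof -
  have "u \<le> 1 + u\<^sup>2"
    using zero_le_power2[of "u - 1/2"] by (simp add: power2_eq_square algebra_simps)
  then have "1 + u \<le> 2 * (1 + u\<^sup>2)" "u + u\<^sup>2 \<le> 2 * (1 + u\<^sup>2)"
    by (smt (verit) zero_le_power2)+
  from this[THEN mult_right_mono, OF assms]
  show "(1 + u) * B \<le> 2 * B * (1 + u\<^sup>2)" "(u + u\<^sup>2) * B \<le> 2 * B * (1 + u\<^sup>2)"
    by (simp_all add: mult_ac)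
qed

text \<open>Scalar forms of the bounds on the summands of \<open>M X\<close>: \<open>p, m, x, y, b\<close> stand for
  \<open>\<phi>\<^sup>+(j), \<phi>\<^sup>-(j), X\<^sup>+(j), X\<^sup>-(j), \<beta>(j)\<close> at \<open>j = n + k\<close>, and \<open>P\<close> for \<open>\<phi>\<^sup>+(n)\<close>.\<close>
lemma weighted_plus_summand_le:
  fixes P p m x y b B :: real
  assumes "\<bar>P\<bar> \<le> \<bar>p\<bar>" "\<bar>p\<^sup>2 * x\<bar> + \<bar>y\<bar> \<le> B"
  shows "P\<^sup>2 * \<bar>b * (p * m * x + m\<^sup>2 * y)\<bar> \<le> 2 * B * \<bar>b * (1 + \<bar>p * m\<bar>\<^sup>2)\<bar>"
proof -
  define u where "u = \<bar>p * m\<bar>"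
  have X: "\<bar>p\<^sup>2 * x\<bar> \<le> B" "\<bar>y\<bar> \<le> B" using assms(2) by auto
  have P2: "P\<^sup>2 \<le> p\<^sup>2" using assms(1) by (metis abs_ge_zero power2_abs power_mono)
  have "P\<^sup>2 * \<bar>p * m * x + m\<^sup>2 * y\<bar> \<le> p\<^sup>2 * (\<bar>p * m * x\<bar> + \<bar>m\<^sup>2 * y\<bar>)"
    using P2 by (intro mult_mono abs_triangle_ineq) auto
  also have "\<dots> = u * \<bar>p\<^sup>2 * x\<bar> + u\<^sup>2 * \<bar>y\<bar>"
    unfolding u_def abs_mult power2_abs[symmetric, of p] power2_abs[symmetric, of m]
    by (simp add: power2_eq_square algebra_simps)
  also have "\<dots> \<le> (u + u\<^sup>2) * B"
    using X by (simp add: distrib_right add_mono mult_left_mono u_def)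
  also have "\<dots> \<le> 2 * B * (1 + u\<^sup>2)"
    using X by (intro le_twice_one_plus_square) auto
  finally show ?thesis by (simp add: u_def abs_mult mult_left_mono mult.left_commute)
qed

lemma minus_summand_le:
  fixes p m x y b B :: real
  assumes "\<bar>p\<^sup>2 * x\<bar> + \<bar>y\<bar> \<le> B"
  shows "\<bar>b * (- (p\<^sup>2) * x - p * m * y)\<bar> \<le> 2 * B * \<bar>b * (1 + \<bar>p * m\<bar>\<^sup>2)\<bar>"
proof -
  define u where "u = \<bar>p * m\<bar>"
  have X: "\<bar>p\<^sup>2 * x\<bar> \<le> B" "\<bar>y\<bar> \<le> B" using assms by auto
  have "\<bar>- (p\<^sup>2) * x - p * m * y\<bar> \<le> \<bar>p\<^sup>2 * x\<bar> + u * \<bar>y\<bar>"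
    using abs_triangle_ineq4[of "- (p\<^sup>2) * x" "p * m * y"] by (simp add: u_def abs_mult)
  also have "\<dots> \<le> (1 + u) * B"
    using X by (simp add: distrib_right add_mono mult_left_mono u_def)
  also have "\<dots> \<le> 2 * B * (1 + u\<^sup>2)"
    using X by (intro le_twice_one_plus_square) auto
  finally show ?thesis by (simp add: u_def abs_mult mult_left_mono mult.left_commute)
qed

lemma plus_summand_le:
  fixes P p m x y b B H :: real
  assumes "\<bar>P\<bar> \<le> \<bar>p\<bar>" "\<bar>p\<^sup>2 * x\<bar> + \<bar>y\<bar> \<le> B" "\<bar>m\<bar> \<le> H"
  shows "\<bar>P\<bar> * \<bar>b * (p * m * x + m\<^sup>2 * y)\<bar> \<le> 2 * B * H * \<bar>b * (1 + \<bar>p * m\<bar>\<^sup>2)\<bar>"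
proof -
  define u where "u = \<bar>p * m\<bar>"
  have X: "\<bar>p\<^sup>2 * x\<bar> \<le> B" "\<bar>y\<bar> \<le> B" using assms(2) by auto
  have "\<bar>P\<bar> * \<bar>p * m * x + m\<^sup>2 * y\<bar> \<le> \<bar>p\<bar> * (\<bar>p * m * x\<bar> + \<bar>m\<^sup>2 * y\<bar>)"
    using assms(1) by (intro mult_mono abs_triangle_ineq) auto
  also have "\<dots> = \<bar>m\<bar> * (\<bar>p\<^sup>2 * x\<bar> + u * \<bar>y\<bar>)"
    by (simp add: u_def abs_mult power2_eq_square algebra_simps)
  also have "\<dots> \<le> H * ((1 + u) * B)"
    using X assms(3)
    by (intro mult_mono) (auto simp: distrib_right add_mono mult_left_mono u_def)
  also have "\<dots> \<le> H * (2 * B * (1 + u\<^sup>2))"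
    using X assms(3) by (intro mult_left_mono le_twice_one_plus_square) auto
  finally have "\<bar>P\<bar> * \<bar>p * m * x + m\<^sup>2 * y\<bar> \<le> H * (2 * B * (1 + u\<^sup>2))" .
  from mult_left_mono[OF this abs_ge_zero[of b]] show ?thesis
    by (simp add: u_def abs_mult mult_ac)
qed

lemma norm_Pair_le_abs_sum: "norm (x::real, y::real) \<le> \<bar>x\<bar> + \<bar>y\<bar>"
  using norm_Pair_le[of x y] by simp

lemma complete_UNIV_bcontfun: "complete (UNIV :: ('a::topological_space \<Rightarrow>\<^sub>C 'b::complete_space) set)"
  unfolding complete_def
proof (intro allI impI)
  fix f :: "nat \<Rightarrow> ('a \<Rightarrow>\<^sub>C 'b)"
  assume "(\<forall>n. f n \<in> UNIV) \<and> Cauchy f"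
  then have "\<forall>e>0. \<exists>M. \<forall>m n x. M \<le> m \<and> M \<le> n \<and> True
      \<longrightarrow> dist (apply_bcontfun (f m) x) (apply_bcontfun (f n) x) < e"
    unfolding Cauchy_def by (metis dist_fun_lt_imp_dist_val_lt)
  then obtain g where "\<forall>e>0. \<exists>M. \<forall>n x. M \<le> n \<and> True \<longrightarrow> dist (apply_bcontfun (f n) x) (g x) < e"
    using uniformly_convergent_eq_cauchy[where P = "\<lambda>_. True" and s = "\<lambda>n. apply_bcontfun (f n)"]
    by auto
  then have "uniform_limit UNIV (\<lambda>n. apply_bcontfun (f n)) g sequentially"
    unfolding uniform_limit_sequentially_iff by auto
  from uniform_limit_bcontfunE[OF this sequentially_bot]
  show "\<exists>l\<in>UNIV. f \<longlonglongrightarrow> l" by blast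
qed

lemma M_op_diff:
  assumes "summable (M_plus_term V V0 pm pp X n)" "summable (M_minus_term V V0 pm pp X n)"
    and "summable (M_plus_term V V0 pm pp Y n)" "summable (M_minus_term V V0 pm pp Y n)"
  shows "M_op V V0 pm pp X n - M_op V V0 pm pp Y n = M_op V V0 pm pp (\<lambda>m. X m - Y m) n"
proof -
  have "M_plus_term V V0 pm pp X n k - M_plus_term V V0 pm pp Y n k
      = M_plus_term V V0 pm pp (\<lambda>m. X m - Y m) n k"
    "M_minus_term V V0 pm pp X n k - M_minus_term V V0 pm pp Y n k
      = M_minus_term V V0 pm pp (\<lambda>m. X m - Y m) n k" for k
    by (simp_all add: M_plus_term_def M_minus_term_def algebra_simps)
  then show ?thesis
    using suminf_diff[OF assms(1,3)] suminf_diff[OF assms(2,4)] by (simp add: M_op_def)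
qed

lemma M_op_split_head:
  assumes "summable (M_plus_term V V0 pm pp X n)" "summable (M_minus_term V V0 pm pp X n)"
  shows "M_op V V0 pm pp X n - M_op V V0 pm pp X (Suc n)
    = (M_plus_term V V0 pm pp X n 0, M_minus_term V V0 pm pp X n 0)"
proof -
  have "(\<lambda>k. M_plus_term V V0 pm pp X n (Suc k)) = M_plus_term V V0 pm pp X (Suc n)"
    "(\<lambda>k. M_minus_term V V0 pm pp X n (Suc k)) = M_minus_term V V0 pm pp X (Suc n)"
    by (simp_all add: fun_eq_iff M_plus_term_def M_minus_term_def)
  then show ?thesis
    using suminf_split_head[OF assms(1)] suminf_split_head[OF assms(2)] by (simp add: M_op_def)
qed

text \<open>The increment \<open>\<beta>(n) K(n) X(n)\<close> is orthogonal to \<open>(\<phi>\<^sup>+(n), \<phi>\<^sup>-(n))\<close>: freezing the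
  coefficients at \<open>n\<close> or at \<open>n + 1\<close> gives the same value at \<open>n\<close>.\<close>
lemma increment_orthogonal:
  "M_plus_term V V0 pm pp X n 0 * pp n + M_minus_term V V0 pm pp X n 0 * pm n = 0"
  by (simp add: M_plus_term_def M_minus_term_def algebra_simps power2_eq_square)

locale decaying_basis =
  fixes V V0 pm pp :: "nat \<Rightarrow> real" and n0 :: nat
  assumes sol_m: "solves V0 pm" and sol_p: "solves V0 pp"
    and basis: "wronskian pm pp \<noteq> 0"
    and lim_m: "pm \<longlonglongrightarrow> 0"
    and mono: "\<forall>n m. n0 \<le> n \<longrightarrow> n \<le> m \<longrightarrow> \<bar>pp n\<bar> \<le> \<bar>pp m\<bar>"
    and l1: "summable (\<lambda>n. \<bar>beta V V0 pm pp n * (1 + \<bar>pp n * pm n\<bar>\<^sup>2)\<bar>)"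
begin

abbreviation "W \<equiv> wronskian pm pp"

definition beta_weight :: "nat \<Rightarrow> real" where
  "beta_weight n = \<bar>beta V V0 pm pp n * (1 + \<bar>pp n * pm n\<bar>\<^sup>2)\<bar>"

definition beta_tail :: "nat \<Rightarrow> real" where
  "beta_tail n = (\<Sum>k. beta_weight (k + n))"

lemma wronskian_at: "pm n * pp (Suc n) - pm (Suc n) * pp n = W"
  using casorati_const[OF sol_m sol_p, of n] by (simp add: wronskian_def)

lemma summable_beta_weight_shift: "summable (\<lambda>k. beta_weight (k + n))"
  using summable_ignore_initial_segment[OF l1] by (simp add: beta_weight_def)

lemma beta_tail_nonneg: "beta_tail n \<ge> 0"
  unfolding beta_tail_def
  by (intro suminf_nonneg summable_beta_weight_shift) (simp add: beta_weight_def)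

lemma beta_tail_antimono:
  assumes "N \<le> n"
  shows "beta_tail n \<le> beta_tail N"
proof -
  have "beta_tail N = (\<Sum>k. beta_weight (k + (n - N) + N)) + (\<Sum>i<n - N. beta_weight (i + N))"
    unfolding beta_tail_def by (rule suminf_split_initial_segment[OF summable_beta_weight_shift])
  moreover have "(\<Sum>k. beta_weight (k + (n - N) + N)) = beta_tail n"
    using assms by (simp add: beta_tail_def add.assoc)
  moreover have "(\<Sum>i<n - N. beta_weight (i + N)) \<ge> 0"
    by (intro sum_nonneg) (simp add: beta_weight_def)
  ultimately show ?thesis by linarith
qed

lemma beta_tail_tendsto_0: "beta_tail \<longlonglongrightarrow> 0"
proof -
  have w: "summable beta_weight"
    using l1 by (simp add: beta_weight_def[abs_def])
  have "beta_tail n = suminf beta_weight - (\<Sum>i<n. beta_weight i)" for n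
    using suminf_split_initial_segment[OF w, of n] by (simp add: beta_tail_def)
  then have "beta_tail = (\<lambda>n. suminf beta_weight - (\<Sum>i<n. beta_weight i))"
    by (simp add: fun_eq_iff)
  moreover have "(\<lambda>n. suminf beta_weight - (\<Sum>i<n. beta_weight i)) \<longlonglongrightarrow> suminf beta_weight - suminf beta_weight"
    by (intro tendsto_intros summable_LIMSEQ w)
  ultimately show ?thesis by simp
qed

lemma tendsto_0_if_le_beta_tail:
  assumes "\<forall>n\<ge>N. \<bar>f n\<bar> \<le> c * beta_tail n"
  shows "f \<longlonglongrightarrow> 0"
proof (rule Lim_null_comparison)
  show "\<forall>\<^sub>F n in sequentially. norm (f n) \<le> c * beta_tail n"
    using assms by (auto simp: eventually_sequentially)
  show "(\<lambda>n. c * beta_tail n) \<longlonglongrightarrow> 0"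
    using tendsto_mult[OF tendsto_const beta_tail_tendsto_0, of c] by simp
qed

lemma eventually_beta_tail_le:
  assumes "e > 0"
  obtains N where "n0 < N" "\<And>n. N \<le> n \<Longrightarrow> beta_tail n \<le> e"
proof -
  obtain M where "\<forall>n\<ge>M. beta_tail n < e"
    using order_tendstoD(2)[OF beta_tail_tendsto_0 assms] by (auto simp: eventually_sequentially)
  then show ?thesis
    by (intro that[of "max M (Suc n0)"]) auto
qed

lemma pp_nonzero:
  assumes "n0 < n"
  shows "pp n \<noteq> 0"
proof -
  have "pp (Suc n0) \<noteq> 0"
  proof
    assume z: "pp (Suc n0) = 0"
    then have "pp n0 = 0" using mono[rule_format, of n0 "Suc n0"] by simp
    then show False using wronskian_at[of n0] z basis by simp
  qed
  moreover have "\<bar>pp (Suc n0)\<bar> \<le> \<bar>pp n\<bar>" using mono assms by auto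
  ultimately show ?thesis by auto
qed

lemma psi_hat_upper:
  assumes "n \<le> m"
  shows "\<bar>pm m\<bar> \<le> psi_hat pm n"
proof -
  obtain K where "\<forall>n. norm (pm n) \<le> K"
    using convergent_imp_Bseq[OF convergentI[OF lim_m]] by (auto simp: Bseq_def)
  then have "bdd_above ((\<lambda>m. \<bar>pm m\<bar>) ` {n..})" by (intro bdd_aboveI2) auto
  then show ?thesis unfolding psi_hat_def by (rule cSUP_upper[rotated]) (use assms in simp)
qed

lemma psi_hat_pos: "psi_hat pm n > 0"
proof -
  have "pm n \<noteq> 0 \<or> pm (Suc n) \<noteq> 0" using wronskian_at[of n] basis by auto
  then show ?thesis using psi_hat_upper[of n n] psi_hat_upper[of n "Suc n"] by auto
qed

lemma M_summand_bounds:
  assumes "n0 < N" "N \<le> n" and X: "\<forall>j\<ge>N. BN_seq pp X j \<le> B"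
  shows "(pp n)\<^sup>2 * \<bar>M_plus_term V V0 pm pp X n k\<bar> \<le> 2 * B * beta_weight (k + n)"
    and "\<bar>M_minus_term V V0 pm pp X n k\<bar> \<le> 2 * B * beta_weight (k + n)"
    and "\<bar>pp n\<bar> * \<bar>M_plus_term V V0 pm pp X n k\<bar> \<le> 2 * B * psi_hat pm n * beta_weight (k + n)"
proof -
  define j where "j = n + k"
  have P: "\<bar>pp n\<bar> \<le> \<bar>pp j\<bar>" using mono assms by (auto simp: j_def)
  have Xj: "\<bar>(pp j)\<^sup>2 * fst (X j)\<bar> + \<bar>snd (X j)\<bar> \<le> B"
    using X assms(2) by (auto simp: BN_seq_def j_def)
  have H: "\<bar>pm j\<bar> \<le> psi_hat pm n" by (rule psi_hat_upper) (simp add: j_def)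
  have w: "beta_weight (k + n) = \<bar>beta V V0 pm pp j * (1 + \<bar>pp j * pm j\<bar>\<^sup>2)\<bar>"
    by (simp add: beta_weight_def j_def add.commute)
  show "(pp n)\<^sup>2 * \<bar>M_plus_term V V0 pm pp X n k\<bar> \<le> 2 * B * beta_weight (k + n)"
    unfolding M_plus_term_def w j_def[symmetric] by (rule weighted_plus_summand_le[OF P Xj])
  show "\<bar>M_minus_term V V0 pm pp X n k\<bar> \<le> 2 * B * beta_weight (k + n)"
    unfolding M_minus_term_def w j_def[symmetric] by (rule minus_summand_le[OF Xj])
  show "\<bar>pp n\<bar> * \<bar>M_plus_term V V0 pm pp X n k\<bar> \<le> 2 * B * psi_hat pm n * beta_weight (k + n)"
    unfolding M_plus_term_def w j_def[symmetric] by (rule plus_summand_le[OF P Xj H])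
qed

lemma M_op_bounds:
  assumes "n0 < N" "N \<le> n" and X: "\<forall>j\<ge>N. BN_seq pp X j \<le> B"
  shows "summable (M_plus_term V V0 pm pp X n)" "summable (M_minus_term V V0 pm pp X n)"
    and "(pp n)\<^sup>2 * \<bar>fst (M_op V V0 pm pp X n)\<bar> \<le> 2 * B * beta_tail n"
    and "\<bar>snd (M_op V V0 pm pp X n)\<bar> \<le> 2 * B * beta_tail n"
    and "\<bar>pp n * fst (M_op V V0 pm pp X n)\<bar> \<le> 2 * B * psi_hat pm n * beta_tail n"
proof -
  have p: "\<bar>pp n\<bar> > 0" using pp_nonzero assms by auto
  note bounds = M_summand_bounds[OF assms]
  have "\<bar>M_plus_term V V0 pm pp X n k\<bar> \<le> (2 * B / (pp n)\<^sup>2) * beta_weight (k + n)"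
    "\<bar>M_plus_term V V0 pm pp X n k\<bar> \<le> (2 * B * psi_hat pm n / \<bar>pp n\<bar>) * beta_weight (k + n)"
    "\<bar>M_minus_term V V0 pm pp X n k\<bar> \<le> (2 * B) * beta_weight (k + n)" for k
    using bounds[of k] p by (simp_all add: field_simps)
  note plus1 = summable_comparison_bound[OF summable_beta_weight_shift this(1)]
    and plus2 = summable_comparison_bound[OF summable_beta_weight_shift this(2)]
    and minus = summable_comparison_bound[OF summable_beta_weight_shift this(3)]
  show "summable (M_plus_term V V0 pm pp X n)" by (rule plus1(1))
  show "summable (M_minus_term V V0 pm pp X n)" by (rule minus(1))
  show "\<bar>snd (M_op V V0 pm pp X n)\<bar> \<le> 2 * B * beta_tail n"
    using minus(2) by (simp add: M_op_def beta_tail_def)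
  have "(pp n)\<^sup>2 * \<bar>fst (M_op V V0 pm pp X n)\<bar> \<le> (pp n)\<^sup>2 * ((2 * B / (pp n)\<^sup>2) * beta_tail n)"
    using plus1(2) by (intro mult_left_mono) (simp_all add: M_op_def beta_tail_def)
  then show "(pp n)\<^sup>2 * \<bar>fst (M_op V V0 pm pp X n)\<bar> \<le> 2 * B * beta_tail n"
    using p by simp
  have "\<bar>pp n\<bar> * \<bar>fst (M_op V V0 pm pp X n)\<bar>
      \<le> \<bar>pp n\<bar> * ((2 * B * psi_hat pm n / \<bar>pp n\<bar>) * beta_tail n)"
    using plus2(2) by (intro mult_left_mono) (simp_all add: M_op_def beta_tail_def)
  then show "\<bar>pp n * fst (M_op V V0 pm pp X n)\<bar> \<le> 2 * B * psi_hat pm n * beta_tail n"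
    using p by (simp add: abs_mult)
qed

lemma BN_seq_M_op_le:
  assumes "n0 < N" "N \<le> n" and "\<forall>j\<ge>N. BN_seq pp X j \<le> B"
  shows "BN_seq pp (M_op V V0 pm pp X) n \<le> 4 * B * beta_tail N"
proof -
  have "BN_seq pp (M_op V V0 pm pp X) n \<le> 4 * B * beta_tail n"
    using M_op_bounds(3,4)[OF assms] by (simp add: BN_seq_def abs_mult)
  also have "\<dots> \<le> 4 * B * beta_tail N"
    using beta_tail_antimono[OF assms(2)] assms(3)[rule_format, of N]
    by (intro mult_left_mono) (auto simp: BN_seq_def)
  finally show ?thesis .
qed

lemma M_contraction:
  assumes "n0 < N" "beta_tail N \<le> 1/8"
  shows "M_contraction_on_BN V V0 pm pp N"
proof -
  have "(\<forall>n\<ge>N. summable (M_plus_term V V0 pm pp X n) \<and> summable (M_minus_term V V0 pm pp X n))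
      \<and> in_BN pp N (M_op V V0 pm pp X)
      \<and> BN_norm pp N (M_op V V0 pm pp X) \<le> 1/2 * BN_norm pp N X"
    if X: "in_BN pp N X" for X
  proof (intro conjI)
    define B where "B = BN_norm pp N X"
    have XB: "\<forall>j\<ge>N. BN_seq pp X j \<le> B"
      using X unfolding B_def BN_norm_def in_BN_def by (auto intro: cSUP_upper)
    have B0: "B \<ge> 0" using XB[rule_format, of N] by (simp add: BN_seq_def)
    show "\<forall>n\<ge>N. summable (M_plus_term V V0 pm pp X n) \<and> summable (M_minus_term V V0 pm pp X n)"
      using M_op_bounds(1,2)[OF assms(1) _ XB] by blast
    have half: "BN_seq pp (M_op V V0 pm pp X) n \<le> 1/2 * B" if "n \<ge> N" for n
      using BN_seq_M_op_le[OF assms(1) that XB] mult_left_mono[OF assms(2) B0] by linarith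
    then show "in_BN pp N (M_op V V0 pm pp X)"
      unfolding in_BN_def by (intro bdd_aboveI2[where M = "1/2 * B"]) auto
    show "BN_norm pp N (M_op V V0 pm pp X) \<le> 1/2 * BN_norm pp N X"
      unfolding BN_norm_def[of _ _ "M_op V V0 pm pp X"] B_def[symmetric]
      using half by (intro cSUP_least) auto
  qed
  then show ?thesis
    unfolding M_contraction_on_BN_def by (intro exI[of _ "1/2"]) auto
qed

text \<open>The fixed point of \<open>X \<mapsto> (0,1) - M X\<close> is found in the complete space of bounded
  sequences, which \<open>X \<mapsto> ((\<phi>\<^sup>+)\<^sup>2 X\<^sup>+, X\<^sup>-)\<close>, shifted to start at \<open>N\<close>, identifies with
  \<open>B\<^sub>N\<close> up to a factor 2 between the norms.\<close>
definition unweight :: "nat \<Rightarrow> (nat \<Rightarrow>\<^sub>C (real \<times> real)) \<Rightarrow> nat \<Rightarrow> real \<times> real" where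
  "unweight N y m = (fst (apply_bcontfun y (m - N)) / (pp m)\<^sup>2, snd (apply_bcontfun y (m - N)))"

definition weighted_fixed_point_map :: "nat \<Rightarrow> (nat \<Rightarrow>\<^sub>C (real \<times> real)) \<Rightarrow> nat \<Rightarrow> real \<times> real" where
  "weighted_fixed_point_map N y k =
     (- ((pp (N + k))\<^sup>2 * fst (M_op V V0 pm pp (unweight N y) (N + k))),
      1 - snd (M_op V V0 pm pp (unweight N y) (N + k)))"

lemma BN_seq_unweight_le:
  assumes "n0 < N"
  shows "\<forall>j\<ge>N. BN_seq pp (unweight N y) j \<le> 2 * norm y"
proof (intro allI impI)
  fix j
  assume "N \<le> j"
  define z where "z = apply_bcontfun y (j - N)"
  have "BN_seq pp (unweight N y) j = norm (fst z) + norm (snd z)"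
    using pp_nonzero assms \<open>N \<le> j\<close> by (simp add: BN_seq_def unweight_def z_def)
  also have "\<dots> \<le> norm z + norm z"
    by (intro add_mono) (metis norm_fst_le norm_snd_le prod.collapse)+
  also have "\<dots> \<le> 2 * norm y" using norm_bounded[of y "j - N"] by (simp add: z_def)
  finally show "BN_seq pp (unweight N y) j \<le> 2 * norm y" .
qed

lemma unweight_diff: "unweight N (y - z) = (\<lambda>m. unweight N y m - unweight N z m)"
  by (simp add: fun_eq_iff unweight_def diff_divide_distrib)

lemma weighted_fixed_point_map_bcontfun:
  assumes "n0 < N"
  shows "weighted_fixed_point_map N y \<in> bcontfun"
proof (rule bcontfun_normI)
  fix k
  define Z where "Z = M_op V V0 pm pp (unweight N y) (N + k)"
  have "norm (weighted_fixed_point_map N y k) \<le> \<bar>(pp (N + k))\<^sup>2 * fst Z\<bar> + \<bar>1 - snd Z\<bar>"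
    using order_trans[OF norm_Pair_le_abs_sum] by (simp add: weighted_fixed_point_map_def Z_def)
  also have "\<dots> \<le> 1 + BN_seq pp (M_op V V0 pm pp (unweight N y)) (N + k)"
    using abs_triangle_ineq4[of 1 "snd Z"] by (simp add: BN_seq_def Z_def)
  also have "\<dots> \<le> 1 + 4 * (2 * norm y) * beta_tail N"
    using BN_seq_M_op_le[OF assms _ BN_seq_unweight_le[OF assms], of "N + k"] by simp
  finally show "norm (weighted_fixed_point_map N y k) \<le> 1 + 4 * (2 * norm y) * beta_tail N" .
qed (simp add: continuous_on_discrete)

lemma weighted_fixed_point_map_contraction:
  assumes N: "n0 < N" "beta_tail N \<le> 1/16"
  shows "dist (Bcontfun (weighted_fixed_point_map N y)) (Bcontfun (weighted_fixed_point_map N z))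
    \<le> 1/2 * dist y z"
proof -
  define D where "D = unweight N (y - z)"
  have "norm (weighted_fixed_point_map N y k - weighted_fixed_point_map N z k) \<le> 1/2 * dist y z"
    for k
  proof -
    note sy = M_op_bounds(1,2)[OF N(1) _ BN_seq_unweight_le[OF N(1), of y], of "N + k"]
    note sz = M_op_bounds(1,2)[OF N(1) _ BN_seq_unweight_le[OF N(1), of z], of "N + k"]
    have "M_op V V0 pm pp (unweight N y) (N + k) - M_op V V0 pm pp (unweight N z) (N + k)
        = M_op V V0 pm pp D (N + k)"
      using M_op_diff[OF sy sz] by (simp add: D_def unweight_diff)
    then have "weighted_fixed_point_map N y k - weighted_fixed_point_map N z k
        = (- ((pp (N + k))\<^sup>2 * fst (M_op V V0 pm pp D (N + k))), - snd (M_op V V0 pm pp D (N + k)))"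
      by (simp add: weighted_fixed_point_map_def prod_eq_iff algebra_simps)
    then have "norm (weighted_fixed_point_map N y k - weighted_fixed_point_map N z k)
        \<le> BN_seq pp (M_op V V0 pm pp D) (N + k)"
      using order_trans[OF norm_Pair_le_abs_sum] by (simp add: BN_seq_def abs_mult)
    also have "\<dots> \<le> 4 * (2 * dist y z) * beta_tail N"
      using BN_seq_M_op_le[OF N(1) _ BN_seq_unweight_le[OF N(1), of "y - z"], of "N + k"]
      by (simp add: D_def dist_norm)
    also have "\<dots> \<le> 1/2 * dist y z"
      using mult_left_mono[OF N(2) zero_le_dist[of y z]] by simp
    finally show ?thesis .
  qed
  then show ?thesis
    using weighted_fixed_point_map_bcontfun[OF N(1)]
    by (intro dist_bound) (simp add: dist_norm Bcontfun_inverse)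
qed

lemma coefficients_fixed_point:
  assumes N: "n0 < N" "beta_tail N \<le> 1/16"
  obtains a B where "\<forall>j\<ge>N. BN_seq pp a j \<le> B"
    and "\<forall>n\<ge>N. a n = (0, 1) - M_op V V0 pm pp a n"
proof -
  have "\<exists>!y\<in>UNIV. Bcontfun (weighted_fixed_point_map N y) = y"
  proof (rule Banach_fix[OF complete_UNIV_bcontfun UNIV_not_empty, of "1/2"])
    show "dist (Bcontfun (weighted_fixed_point_map N y)) (Bcontfun (weighted_fixed_point_map N z))
        \<le> 1/2 * dist y z" for y z
      by (rule weighted_fixed_point_map_contraction[OF N])
  qed simp_all
  then obtain y where fp: "Bcontfun (weighted_fixed_point_map N y) = y" by blast
  then have y: "apply_bcontfun y k = weighted_fixed_point_map N y k" for k
    using weighted_fixed_point_map_bcontfun[OF N(1)] by (metis Bcontfun_inverse)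
  show ?thesis
  proof (rule that[of "unweight N y" "2 * norm y"])
    show "\<forall>j\<ge>N. BN_seq pp (unweight N y) j \<le> 2 * norm y"
      by (rule BN_seq_unweight_le[OF N(1)])
    show "\<forall>n\<ge>N. unweight N y n = (0, 1) - M_op V V0 pm pp (unweight N y) n"
    proof (intro allI impI)
      fix n
      assume n: "N \<le> n"
      have "unweight N y n = (fst (weighted_fixed_point_map N y (n - N)) / (pp n)\<^sup>2,
          snd (weighted_fixed_point_map N y (n - N)))"
        by (simp add: unweight_def y)
      also have "\<dots> = (0, 1) - M_op V V0 pm pp (unweight N y) n"
        using n pp_nonzero[of n] N(1) by (simp add: weighted_fixed_point_map_def prod_eq_iff)
      finally show "unweight N y n = (0, 1) - M_op V V0 pm pp (unweight N y) n" .
    qed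
  qed
qed

text \<open>At \<open>n + 1\<close> the increment reproduces the perturbation, because
  \<open>\<beta>(n) W = V(n) - V\<^sup>0(n)\<close>.\<close>
lemma increment_next:
  "M_plus_term V V0 pm pp X n 0 * pp (Suc n) + M_minus_term V V0 pm pp X n 0 * pm (Suc n)
    = (V n - V0 n) * (fst (X n) * pp n + snd (X n) * pm n)"
proof -
  have "M_plus_term V V0 pm pp X n 0 * pp (Suc n) + M_minus_term V V0 pm pp X n 0 * pm (Suc n)
      = beta V V0 pm pp n * (pm n * pp (Suc n) - pm (Suc n) * pp n)
        * (fst (X n) * pp n + snd (X n) * pm n)"
    by (simp add: M_plus_term_def M_minus_term_def algebra_simps power2_eq_square)
  then show ?thesis
    using basis by (simp add: wronskian_at beta_def)
qed

lemma recombination_solves: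
  assumes incr: "\<forall>n\<ge>N. a (Suc n) - a n = (M_plus_term V V0 pm pp a n 0, M_minus_term V V0 pm pp a n 0)"
  defines "g \<equiv> \<lambda>n. fst (a n) * pp n + snd (a n) * pm n"
  shows "\<forall>n\<ge>N. g n = fst (a (Suc n)) * pp n + snd (a (Suc n)) * pm n"
    and "\<forall>n\<ge>Suc N. - lap g n + V n * g n = 0"
proof -
  have step: "a (Suc n) = a n + (M_plus_term V V0 pm pp a n 0, M_minus_term V V0 pm pp a n 0)"
    if "n \<ge> N" for n
    using incr that by (metis add.commute diff_add_cancel)
  show shift: "\<forall>n\<ge>N. g n = fst (a (Suc n)) * pp n + snd (a (Suc n)) * pm n"
    using step increment_orthogonal by (simp add: g_def algebra_simps)
  show "\<forall>n\<ge>Suc N. - lap g n + V n * g n = 0"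
  proof (intro allI impI)
    fix n
    assume "n \<ge> Suc N"
    then obtain k where k: "n = Suc k" "k \<ge> N" by (cases n) auto
    have gk: "g k = fst (a (Suc k)) * pp k + snd (a (Suc k)) * pm k"
      using shift k(2) by blast
    have "g (Suc (Suc k)) = fst (a (Suc k)) * pp (Suc (Suc k)) + snd (a (Suc k)) * pm (Suc (Suc k))
        + (V (Suc k) - V0 (Suc k)) * g (Suc k)"
      using step[of "Suc k"] increment_next[of a "Suc k"] k(2)
      by (simp add: g_def algebra_simps)
    also have "\<dots> = (2 + V (Suc k)) * g (Suc k) - g k"
      unfolding gk solves_recurrence[OF sol_p] solves_recurrence[OF sol_m]
      by (simp add: g_def algebra_simps)
    finally show "- lap g n + V n * g n = 0"
      by (simp add: k(1) lap_def algebra_simps)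
  qed
qed

lemma coeffs_of_frozen_combination:
  assumes "psi n = fst c * pp n + snd c * pm n"
    and "psi (Suc n) = fst c * pp (Suc n) + snd c * pm (Suc n)"
  shows "coeff_plus pm pp psi (Suc n) = fst c" "coeff_minus pm pp psi (Suc n) = snd c"
proof -
  have "pm n * psi (Suc n) - pm (Suc n) * psi n = fst c * W"
    "psi n * pp (Suc n) - psi (Suc n) * pp n = snd c * W"
    unfolding assms wronskian_at[symmetric, of n] by (simp_all add: algebra_simps)
  then show "coeff_plus pm pp psi (Suc n) = fst c" "coeff_minus pm pp psi (Suc n) = snd c"
    using basis by (simp_all add: coeff_plus_def coeff_minus_def)
qed

lemma solution_from_fixed_point:
  assumes N: "n0 < N" and aB: "\<forall>j\<ge>N. BN_seq pp a j \<le> B"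
    and fp: "\<forall>n\<ge>N. a n = (0, 1) - M_op V V0 pm pp a n"
  obtains psi where "solves V psi"
    and "\<forall>n\<ge>N. psi n = fst (a n) * pp n + snd (a n) * pm n"
    and "\<forall>n\<ge>Suc N. coeff_plus pm pp psi n = fst (a n) \<and> coeff_minus pm pp psi n = snd (a n)"
proof -
  have "\<forall>n\<ge>N. a (Suc n) - a n = (M_plus_term V V0 pm pp a n 0, M_minus_term V V0 pm pp a n 0)"
  proof (intro allI impI)
    fix n
    assume n: "N \<le> n"
    then have "a (Suc n) - a n = M_op V V0 pm pp a n - M_op V V0 pm pp a (Suc n)"
      using fp by simp
    also have "\<dots> = (M_plus_term V V0 pm pp a n 0, M_minus_term V V0 pm pp a n 0)"
      using M_op_split_head M_op_bounds(1,2)[OF N n aB] by blast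
    finally show "a (Suc n) - a n = (M_plus_term V V0 pm pp a n 0, M_minus_term V V0 pm pp a n 0)" .
  qed
  note recomb = recombination_solves[OF this]
  obtain psi where psi: "solves V psi"
    and psi_eq: "\<forall>n\<ge>N. psi n = fst (a n) * pp n + snd (a n) * pm n"
    using solves_extend_tail[OF recomb(2)] by blast
  have "coeff_plus pm pp psi n = fst (a n) \<and> coeff_minus pm pp psi n = snd (a n)"
    if n: "n \<ge> Suc N" for n
  proof -
    obtain k where k: "n = Suc k" "N \<le> k" using n by (cases n) auto
    have "psi k = fst (a n) * pp k + snd (a n) * pm k"
      using psi_eq recomb(1) k by simp
    moreover have "psi (Suc k) = fst (a n) * pp (Suc k) + snd (a n) * pm (Suc k)"
      using psi_eq k by simp
    ultimately show ?thesis
      unfolding k(1) using coeffs_of_frozen_combination by blast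
  qed
  then show ?thesis using that psi psi_eq by blast
qed

lemma fixed_point_bounds:
  assumes N: "n0 < N" and aB: "\<forall>j\<ge>N. BN_seq pp a j \<le> B"
    and fp: "\<forall>n\<ge>N. a n = (0, 1) - M_op V V0 pm pp a n"
    and n: "N \<le> n"
  shows "\<bar>fst (a n)\<bar> \<le> (2 * B / (pp N)\<^sup>2) * beta_tail n"
    and "\<bar>snd (a n) - 1\<bar> \<le> 2 * B * beta_tail n"
    and "\<bar>fst (a n) * pp n + snd (a n) * pm n - pm n\<bar> \<le> 4 * B * beta_tail n * psi_hat pm n"
proof -
  define Mn where "Mn = M_op V V0 pm pp a n"
  have a: "fst (a n) = - fst Mn" "snd (a n) = 1 - snd Mn"
    using fp n by (simp_all add: Mn_def)
  note bounds = M_op_bounds(3-5)[OF N n aB, folded Mn_def]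
  have "\<bar>pp N\<bar> \<le> \<bar>pp n\<bar>" using mono N n by simp
  then have "(pp N)\<^sup>2 \<le> (pp n)\<^sup>2"
    using power_mono[of "\<bar>pp N\<bar>" "\<bar>pp n\<bar>" 2] by simp
  then have "(pp N)\<^sup>2 * \<bar>fst Mn\<bar> \<le> 2 * B * beta_tail n"
    using bounds(1) mult_right_mono[of "(pp N)\<^sup>2" "(pp n)\<^sup>2" "\<bar>fst Mn\<bar>"] by simp
  then show "\<bar>fst (a n)\<bar> \<le> (2 * B / (pp N)\<^sup>2) * beta_tail n"
    using pp_nonzero[OF N] a(1) by (simp add: field_simps)
  show "\<bar>snd (a n) - 1\<bar> \<le> 2 * B * beta_tail n" using bounds(2) a(2) by simp
  have B: "0 \<le> B" using aB[rule_format, of N] by (simp add: BN_seq_def)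
  have "\<bar>fst (a n) * pp n + snd (a n) * pm n - pm n\<bar> = \<bar>- (pp n * fst Mn) - snd Mn * pm n\<bar>"
    unfolding a by (simp add: algebra_simps)
  also have "\<dots> \<le> \<bar>pp n * fst Mn\<bar> + \<bar>snd Mn\<bar> * \<bar>pm n\<bar>"
    using abs_triangle_ineq4[of "- (pp n * fst Mn)" "snd Mn * pm n"] by (simp add: abs_mult)
  also have "\<dots> \<le> 2 * B * psi_hat pm n * beta_tail n + (2 * B * beta_tail n) * psi_hat pm n"
    using bounds(2,3) psi_hat_upper[of n n] B beta_tail_nonneg[of n]
    by (intro add_mono mult_mono) auto
  finally show "\<bar>fst (a n) * pp n + snd (a n) * pm n - pm n\<bar> \<le> 4 * B * beta_tail n * psi_hat pm n"
    by (simp add: mult_ac)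
qed

lemma existence:
  obtains psi where "solves V psi"
    and "coeff_plus pm pp psi \<longlonglongrightarrow> 0" "coeff_minus pm pp psi \<longlonglongrightarrow> 1"
    and "\<exists>r. r \<longlonglongrightarrow> 0 \<and> (\<forall>n. psi n = pm n + r n * psi_hat pm n)"
proof -
  obtain N where N: "n0 < N" "beta_tail N \<le> 1/16"
    using eventually_beta_tail_le[of "1/16"] by auto
  obtain a B where aB: "\<forall>j\<ge>N. BN_seq pp a j \<le> B"
    and fp: "\<forall>n\<ge>N. a n = (0, 1) - M_op V V0 pm pp a n"
    using coefficients_fixed_point[OF N] by blast
  note bounds = fixed_point_bounds[OF N(1) aB fp]
  obtain psi where psi: "solves V psi"
    and psi_eq: "\<forall>n\<ge>N. psi n = fst (a n) * pp n + snd (a n) * pm n"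
    and coeffs: "\<forall>n\<ge>Suc N. coeff_plus pm pp psi n = fst (a n) \<and> coeff_minus pm pp psi n = snd (a n)"
    using solution_from_fixed_point[OF N(1) aB fp] by blast
  have "coeff_plus pm pp psi \<longlonglongrightarrow> 0"
    using bounds(1) coeffs
    by (intro tendsto_0_if_le_beta_tail[of "Suc N" _ "2 * B / (pp N)\<^sup>2"]) auto
  moreover have "(\<lambda>n. coeff_minus pm pp psi n - 1) \<longlonglongrightarrow> 0"
    using bounds(2) coeffs by (intro tendsto_0_if_le_beta_tail[of "Suc N" _ "2 * B"]) auto
  then have "coeff_minus pm pp psi \<longlonglongrightarrow> 1" by (rule LIM_zero_cancel)
  moreover define r where "r n = (psi n - pm n) / psi_hat pm n" for n
  have "\<bar>r n\<bar> \<le> 4 * B * beta_tail n" if "N \<le> n" for n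
    using bounds(3)[OF that] psi_eq that psi_hat_pos[of n]
    by (simp add: r_def abs_divide pos_divide_le_eq)
  then have "r \<longlonglongrightarrow> 0"
    by (intro tendsto_0_if_le_beta_tail) blast
  moreover have "\<forall>n. psi n = pm n + r n * psi_hat pm n"
    using psi_hat_pos by (simp add: r_def less_imp_neq[symmetric])
  ultimately show ?thesis
    using that[OF psi] by blast
qed

lemma casorati_via_coeffs:
  "f n * g (Suc n) - f (Suc n) * g n
    = W * (coeff_minus pm pp f (Suc n) * coeff_plus pm pp g (Suc n)
           - coeff_plus pm pp f (Suc n) * coeff_minus pm pp g (Suc n))"
proof -
  define cp where "cp h = pm n * h (Suc n) - pm (Suc n) * h n" for h :: "nat \<Rightarrow> real"
  define cm where "cm h = h n * pp (Suc n) - h (Suc n) * pp n" for h :: "nat \<Rightarrow> real"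
  have "cm f * cp g - cp f * cm g = (f n * g (Suc n) - f (Suc n) * g n) * W"
    unfolding cp_def cm_def wronskian_at[symmetric, of n] by (simp add: algebra_simps)
  moreover have "W * ((cm f / W) * (cp g / W) - (cp f / W) * (cm g / W))
      = (cm f * cp g - cp f * cm g) / W"
    using basis by (simp add: field_simps power2_eq_square)
  ultimately show ?thesis
    using basis by (simp add: coeff_plus_def coeff_minus_def cp_def cm_def)
qed

lemma uniqueness:
  assumes psi: "solves V psi" "coeff_plus pm pp psi \<longlonglongrightarrow> 0" "coeff_minus pm pp psi \<longlonglongrightarrow> 1"
    and psi': "solves V psi'" "coeff_plus pm pp psi' \<longlonglongrightarrow> 0" "coeff_minus pm pp psi' \<longlonglongrightarrow> 1"
  shows "psi' = psi"
proof -
  define D where "D n = psi' n - 1 * psi n" for n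
  have D: "solves V D"
    unfolding D_def[abs_def] by (rule solves_diff_scaled[OF psi'(1) psi(1)])
  have cpD: "coeff_plus pm pp D \<longlonglongrightarrow> 0" and cmD: "coeff_minus pm pp D \<longlonglongrightarrow> 0"
    unfolding D_def[abs_def] coeff_plus_diff_scaled coeff_minus_diff_scaled
    using tendsto_diff[OF psi'(2) psi(2)] tendsto_diff[OF psi'(3) psi(3)] by simp_all
  define c0 where "c0 = D 0 * psi 1 - D 1 * psi 0"
  have "(\<lambda>n. W * (coeff_minus pm pp D (Suc n) * coeff_plus pm pp psi (Suc n)
              - coeff_plus pm pp D (Suc n) * coeff_minus pm pp psi (Suc n))) \<longlonglongrightarrow> W * (0 * 0 - 0 * 1)"
    using tendsto_mult[OF tendsto_const tendsto_diff[OF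
        tendsto_mult[OF LIMSEQ_Suc[OF cmD] LIMSEQ_Suc[OF psi(2)]]
        tendsto_mult[OF LIMSEQ_Suc[OF cpD] LIMSEQ_Suc[OF psi(3)]]], of W] .
  moreover have "(\<lambda>n. W * (coeff_minus pm pp D (Suc n) * coeff_plus pm pp psi (Suc n)
              - coeff_plus pm pp D (Suc n) * coeff_minus pm pp psi (Suc n))) = (\<lambda>n. c0)"
  proof
    fix n
    show "W * (coeff_minus pm pp D (Suc n) * coeff_plus pm pp psi (Suc n)
        - coeff_plus pm pp D (Suc n) * coeff_minus pm pp psi (Suc n)) = c0"
      using casorati_via_coeffs[of D n psi] casorati_const[OF D psi(1), of n]
      unfolding c0_def by linarith
  qed
  ultimately have "c0 = 0" by (simp add: LIMSEQ_const_iff)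
  obtain k where k: "psi k \<noteq> 0"
  proof (rule ccontr)
    assume "\<not> thesis"
    then have "psi k = 0" for k using that by blast
    then have "coeff_minus pm pp psi = (\<lambda>n. 0)" by (simp add: coeff_minus_def fun_eq_iff)
    then show False using psi(3) LIMSEQ_const_iff[of "0::real" 1] by simp
  qed
  define \<alpha> where "\<alpha> = D k / psi k"
  have D_prop: "D n = \<alpha> * psi n" for n
    unfolding \<alpha>_def using \<open>c0 = 0\<close> by (intro solves_proportional_if_casorati_zero[OF D psi(1) k]) (simp add: c0_def)
  then have "coeff_minus pm pp D = (\<lambda>n. \<alpha> * coeff_minus pm pp psi n)"
    by (simp add: fun_eq_iff coeff_minus_def algebra_simps diff_divide_distrib)
  then have "coeff_minus pm pp D \<longlonglongrightarrow> \<alpha> * 1"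
    using tendsto_mult[OF tendsto_const psi(3)] by simp
  then have "\<alpha> = 0" using LIMSEQ_unique[OF _ cmD] by simp
  then show ?thesis using D_prop by (simp add: D_def fun_eq_iff)
qed

end

theorem theorem2:
  fixes V V0 pm pp :: "nat \<Rightarrow> real"
  assumes sol_m: "solves V0 pm" and sol_p: "solves V0 pp"
    and basis: "wronskian pm pp \<noteq> 0"
    and lim_m: "pm \<longlonglongrightarrow> 0"
    and mono_p: "\<exists>n0. \<forall>n m. n0 \<le> n \<longrightarrow> n \<le> m \<longrightarrow> \<bar>pp n\<bar> \<le> \<bar>pp m\<bar>"
    and l1: "summable (\<lambda>n. \<bar>beta V V0 pm pp n * (1 + \<bar>pp n * pm n\<bar>\<^sup>2)\<bar>)"
  shows "(\<exists>N0. \<forall>N\<ge>N0. M_contraction_on_BN V V0 pm pp N)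
    \<and> (\<exists>psi. solves V psi
           \<and> coeff_plus pm pp psi \<longlonglongrightarrow> 0 \<and> coeff_minus pm pp psi \<longlonglongrightarrow> 1
           \<and> (\<forall>psi'. solves V psi' \<and> coeff_plus pm pp psi' \<longlonglongrightarrow> 0
                      \<and> coeff_minus pm pp psi' \<longlonglongrightarrow> 1 \<longrightarrow> psi' = psi)
           \<and> (\<exists>r. r \<longlonglongrightarrow> 0 \<and> (\<forall>n. psi n = pm n + r n * psi_hat pm n)))"
proof -
  obtain n0 where "\<forall>n m. n0 \<le> n \<longrightarrow> n \<le> m \<longrightarrow> \<bar>pp n\<bar> \<le> \<bar>pp m\<bar>"
    using mono_p by blast
  then interpret decaying_basis V V0 pm pp n0
    using sol_m sol_p basis lim_m l1 by unfold_locales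
  obtain N0 where "n0 < N0" "\<And>n. N0 \<le> n \<Longrightarrow> beta_tail n \<le> 1/8"
    using eventually_beta_tail_le[of "1/8"] by auto
  then have "\<forall>N\<ge>N0. M_contraction_on_BN V V0 pm pp N"
    by (auto intro: M_contraction)
  moreover obtain psi where psi: "solves V psi"
    "coeff_plus pm pp psi \<longlonglongrightarrow> 0" "coeff_minus pm pp psi \<longlonglongrightarrow> 1"
    "\<exists>r. r \<longlonglongrightarrow> 0 \<and> (\<forall>n. psi n = pm n + r n * psi_hat pm n)"
    by (rule existence)
  moreover have "\<forall>psi'. solves V psi' \<and> coeff_plus pm pp psi' \<longlonglongrightarrow> 0
      \<and> coeff_minus pm pp psi' \<longlonglongrightarrow> 1 \<longrightarrow> psi' = psi"
    using uniqueness[OF psi(1-3)] by blast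
  ultimately show ?thesis by blast
qed

end
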